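(* Suppose $\{0,1\}\subseteq\Sigma$ and $m\ge2$. Let $\pi=x_0^{n_0}x_1^{n_1}\cdots x_k^{n_k}$ with distinct variables $x_0,\dots,x_k$ and $n_0,\dots,n_k\in\{2,\dots,m\}$. Suppose that for some positive integers $\ell,i_1,\dots,i_\ell$, $w:=(01)^{i_1}(0^21)^{i_2}\cdots(0^\ell1)^{i_\ell}\in L(\pi)$. For $j\in\{1,\dots,\ell\}$ let $I_j$ be the interval of positions of $w$ occupied by the factor $(0^j1)^{i_j}$ in this factorisation, and for $j\in\{0,\dots,k\}$ let $J_j$ be the interval of positions of $\pi$ occupied by $x_j^{n_j}$. Let $h$ be any substitution with $h(\pi)=w$ and $h(x_i)\neq\varepsilon$ for all $i\in\{0,\dots,k\}$. Then: (i) for every $j\in\{0,\dots,k\}$, $h(x_j)=(0^{j'}1)^{i'}$ for some $j'\in\{1,\dots,\ell\}$ and $i'\in\{1,\dots,i_{j'}\}$; (ii) for every $j\in\{1,\dots,\ell\}$ there are $g_j\in\{0,\dots,k\}$ and $h_j\in\{0,\dots,k-g_j\}$ such that $I_j$ is the disjoint union $\bigcup_{l=0}^{h_j}\mathcal I_{h,\pi}(J_{g_j+l})$.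
   Context: Fix a countably infinite set $X$ of variables and an alphabet $\Sigma$ disjoint from $X$. A pattern is a nonempty finite string over $X\cup\Sigma$. A substitution is a morphism $h:(X\cup\Sigma)^*\to\Sigma^*$ fixing letters; $L(\pi)$ (erasing pattern language) is the set of all $h(\pi)$. For a substitution $h$ and a pattern $\pi$, $\mathcal I_{h,\pi}$ maps a closed interval $[p,q]$ of positions of $\pi$ to the closed interval of positions of $h(\pi)$ occupied by the factor $h(\pi[p]\cdots\pi[q])$ in $h(\pi)=h(\pi[1])\cdots h(\pi[|\pi|])$. *)

theory Defs
  imports Main
begin

datatype ('x, 'a) sym = Var 'x | Ter 'a

definition subst_sym :: "('x \<Rightarrow> 'a list) \<Rightarrow> ('x, 'a) sym \<Rightarrow> 'a list" where
  "subst_sym h s = (case s of Var x \<Rightarrow> h x | Ter a \<Rightarrow> [a])"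

definition subst :: "('x \<Rightarrow> 'a list) \<Rightarrow> ('x, 'a) sym list \<Rightarrow> 'a list" where
  "subst h \<pi> = concat (map (subst_sym h) \<pi>)"

definition lang :: "('x, 'a) sym list \<Rightarrow> 'a list set" where
  "lang \<pi> = {subst h \<pi> | h. True}"

text \<open>The map I_{h,pi} on closed intervals [p,q] of (1-based) positions of pi:
  the interval of positions of h(pi) occupied by h(pi[p]...pi[q]).\<close>
definition Imap :: "('x \<Rightarrow> 'a list) \<Rightarrow> ('x, 'a) sym list \<Rightarrow> nat \<Rightarrow> nat \<Rightarrow> nat set" where
  "Imap h \<pi> p q = {length (subst h (take (p - 1) \<pi>)) + 1 .. length (subst h (take q \<pi>))}"

definition blk :: "'a \<Rightarrow> 'a \<Rightarrow> nat \<Rightarrow> nat \<Rightarrow> 'a list" where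
  "blk c0 c1 j i = concat (replicate i (replicate j c0 @ [c1]))"

definition powpat :: "(nat \<Rightarrow> 'x) \<Rightarrow> (nat \<Rightarrow> nat) \<Rightarrow> nat \<Rightarrow> ('x, 'a) sym list" where
  "powpat x n k = concat (map (\<lambda>j. replicate (n j) (Var (x j))) [0..<Suc k])"

definition wword :: "'a \<Rightarrow> 'a \<Rightarrow> (nat \<Rightarrow> nat) \<Rightarrow> nat \<Rightarrow> 'a list" where
  "wword c0 c1 i l = concat (map (\<lambda>j. blk c0 c1 j (i j)) [1..<Suc l])"

text \<open>I_j: positions (1-based) of w occupied by the factor (0^j 1)^{i_j}.\<close>
definition Iw :: "(nat \<Rightarrow> nat) \<Rightarrow> nat \<Rightarrow> nat set" where
  "Iw i j = {(\<Sum>t\<in>{1..<j}. (t + 1) * i t) + 1 .. (\<Sum>t\<in>{1..j}. (t + 1) * i t)}"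

text \<open>J_j: positions (1-based) of pi occupied by x_j^{n_j}, as start and end.\<close>
definition Jstart :: "(nat \<Rightarrow> nat) \<Rightarrow> nat \<Rightarrow> nat" where
  "Jstart n j = (\<Sum>t<j. n t) + 1"

definition Jend :: "(nat \<Rightarrow> nat) \<Rightarrow> nat \<Rightarrow> nat" where
  "Jend n j = (\<Sum>t\<le>j. n t)"

end

theory Submission
  imports Defs
begin

text \<open>Write \<open>w\<close> as the unary code (a number \<open>a\<close> coded as \<open>0\<^sup>a1\<close>) of the sorted list
  \<open>E = 1\<^bsup>i\<^sub>1\<^esup> 2\<^bsup>i\<^sub>2\<^esup> \<dots> l\<^bsup>i\<^sub>l\<^esup>\<close>. If a sorted code word ends with a proper power
  \<open>u\<^sup>n\<close>, \<open>n \<ge> 2\<close>, then \<open>u\<close> is the code of a constant list \<open>j\<^sup>L\<close>: the separators \<open>1\<close>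
  force every copy of \<open>u\<close> but the first to be aligned with the coded list, and sortedness forces
  the first one as well. Peeling the factors \<open>h(x\<^sub>k)\<^bsup>n\<^sub>k\<^esup>, \<dots>, h(x\<^sub>0)\<^bsup>n\<^sub>0\<^esup>\<close> off \<open>w\<close>
  from the right therefore cuts \<open>E\<close> into consecutive runs \<open>j\<^sub>t\<^bsup>n\<^sub>t L\<^sub>t\<^esup>\<close> with
  \<open>h(x\<^sub>t) = (0\<^bsup>j\<^sub>t\<^esup>1)\<^bsup>L\<^sub>t\<^esup>\<close>, which is (i). Every position where \<open>E\<close> changes its value is then
  a boundary between two such runs, which is (ii).\<close>

lemma concat_replicate_snoc: "concat (replicate (Suc n) xs) = concat (replicate n xs) @ xs"
  by (induction n) auto

lemma concat_replicate_replicate: "concat (replicate n (replicate m x)) = replicate (n * m) x"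
  by (induction n) (simp_all add: replicate_add)

lemma count_list_replicate [simp]: "count_list (replicate n x) x = n"
  by (induction n) auto

lemma sorted_append_self_imp_replicate:
  assumes "sorted (cs @ cs)" "cs \<noteq> []"
  shows "cs = replicate (length cs) (hd cs)"
proof -
  have "\<forall>x\<in>set cs. \<forall>y\<in>set cs. x \<le> y" using assms(1) by (simp add: sorted_append)
  then have "\<forall>y\<in>set cs. y = hd cs" using assms(2) by (metis hd_in_set order_antisym)
  then show ?thesis by (metis replicate_length_same)
qed

lemma replicate_append_Cons_cancel:
  assumes "c0 \<noteq> c1" "replicate a c0 @ c1 # xs = replicate b c0 @ c1 # ys"
  shows "a = b \<and> xs = ys"
  using assms(2)
proof (induction a arbitrary: b)
  case 0
  then show ?case using assms(1) by (cases b) auto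
next
  case (Suc a)
  then show ?case using assms(1) by (cases b) auto
qed

lemma last_prefix_of_replicate_snoc:
  assumes "xs @ ys = replicate a c0 @ [c1]" "xs \<noteq> []" "ys \<noteq> []"
  shows "last xs = c0"
proof -
  have "xs @ butlast ys = replicate a c0"
    using assms(1,3) by (metis butlast_append butlast_snoc append_is_Nil_conv)
  then have "set xs \<subseteq> set (replicate a c0)"
    by (metis Un_upper1 set_append)
  then have "set xs \<subseteq> {c0}"
    by (auto split: if_splits)
  then show ?thesis using assms(2) last_in_set by blast
qed

lemma length_concat_replicate_upt:
  "length (concat (map (\<lambda>t. replicate (N t) (a t)) [0..<K])) = (\<Sum>t<K. N t)"
  by (induction K) auto

lemma concat_map_upt_split:
  "t < K \<Longrightarrow> concat (map f [0..<K]) = concat (map f [0..<t]) @ f t @ concat (map f [Suc t..<K])"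
proof -
  assume "t < K"
  then have "[0..<K] = [0..<t] @ t # [Suc t..<K]"
    using upt_add_eq_append[of 0 t "K - t"] upt_conv_Cons[of t K] by simp
  then show ?thesis by simp
qed

lemma take_length_concat_map_upt:
  "g \<le> K \<Longrightarrow> take (length (concat (map f [0..<g]))) (concat (map f [0..<K])) = concat (map f [0..<g])"
  using upt_add_eq_append[of 0 g "K - g"] by simp

lemma run_boundary_is_block_boundary:
  assumes "ys @ zs = concat (map (\<lambda>t. replicate (N t) (a t)) [0..<K])"
    and "zs \<noteq> []" "last ys \<noteq> hd zs"
  shows "\<exists>g\<le>K. length ys = (\<Sum>t<g. N t)"
  using assms
proof (induction K arbitrary: zs)
  case 0
  then show ?case by simp
next
  case (Suc K)
  define xs where "xs = concat (map (\<lambda>t. replicate (N t) (a t)) [0..<K])"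
  have "ys @ zs = xs @ replicate (N K) (a K)" using Suc.prems(1) by (simp add: xs_def)
  then obtain us where "ys = xs @ us \<and> us @ zs = replicate (N K) (a K) \<or>
      ys @ us = xs \<and> zs = us @ replicate (N K) (a K)"
    by (auto simp only: append_eq_append_conv2)
  then show ?case
  proof (elim disjE conjE)
    assume ys: "ys = xs @ us" and run: "us @ zs = replicate (N K) (a K)"
    show ?case
    proof (cases "us = []")
      case True
      then show ?thesis using ys by (intro exI[of _ K]) (simp add: xs_def length_concat_replicate_upt)
    next
      case False
      have "set (us @ zs) \<subseteq> {a K}" unfolding run by (simp add: set_replicate_conv_if)
      then have "last us = a K" "hd zs = a K"
        using last_in_set[OF False] hd_in_set[OF \<open>zs \<noteq> []\<close>] by auto
      then have "last ys = hd zs" using False ys by simp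
      with Suc.prems(3) show ?thesis by contradiction
    qed
  next
    assume ys: "ys @ us = xs" and zs: "zs = us @ replicate (N K) (a K)"
    show ?case
    proof (cases "us = []")
      case True
      then show ?thesis using ys by (intro exI[of _ K]) (simp add: xs_def length_concat_replicate_upt)
    next
      case False
      then have "\<exists>g\<le>K. length ys = (\<Sum>t<g. N t)"
        using Suc.IH[of us] ys Suc.prems(3) zs by (simp add: xs_def)
      then show ?thesis using le_SucI by blast
    qed
  qed
qed

section \<open>Consecutive intervals\<close>

lemma UN_consecutive_intervals:
  fixes p :: "nat \<Rightarrow> nat"
  assumes "mono p"
  shows "(\<Union>t\<in>{0..d}. {p (g + t) + 1 .. p (Suc (g + t))}) = {p g + 1 .. p (Suc (g + d))}"
proof (induction d)
  case (Suc d)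
  have "{0..Suc d} = insert (Suc d) {0..d}" by auto
  then show ?case
    using Suc monoD[OF assms, of g "Suc (g + d)"] monoD[OF assms, of "Suc (g + d)" "Suc (Suc (g + d))"]
    by auto
qed simp

lemma consecutive_intervals_disjoint:
  fixes p :: "nat \<Rightarrow> nat"
  assumes "mono p" "s \<noteq> t"
  shows "{p s + 1 .. p (Suc s)} \<inter> {p t + 1 .. p (Suc t)} = {}"
proof -
  have "Suc s \<le> t \<or> Suc t \<le> s" using assms(2) by linarith
  then have "p (Suc s) \<le> p t \<or> p (Suc t) \<le> p s" using monoD[OF assms(1)] by blast
  then show ?thesis by auto
qed

lemma interval_eq_disjoint_UN_consecutive:
  fixes p :: "nat \<Rightarrow> nat"
  assumes "mono p" "g < g'"
  shows "{p g + 1 .. p g'} = (\<Union>t\<in>{0..g' - Suc g}. {p (g + t) + 1 .. p (Suc (g + t))})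
    \<and> (\<forall>t1\<in>{0..g' - Suc g}. \<forall>t2\<in>{0..g' - Suc g}. t1 \<noteq> t2 \<longrightarrow>
         {p (g + t1) + 1 .. p (Suc (g + t1))} \<inter> {p (g + t2) + 1 .. p (Suc (g + t2))} = {})"
proof
  show "{p g + 1 .. p g'} = (\<Union>t\<in>{0..g' - Suc g}. {p (g + t) + 1 .. p (Suc (g + t))})"
    using UN_consecutive_intervals[OF assms(1), of g "g' - Suc g"] assms(2) by simp
  show "\<forall>t1\<in>{0..g' - Suc g}. \<forall>t2\<in>{0..g' - Suc g}. t1 \<noteq> t2 \<longrightarrow>
      {p (g + t1) + 1 .. p (Suc (g + t1))} \<inter> {p (g + t2) + 1 .. p (Suc (g + t2))} = {}"
    by (intro ballI impI consecutive_intervals_disjoint[OF assms(1)]) simp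
qed

section \<open>Unary codes of lists of numbers\<close>

definition unary_code :: "'a \<Rightarrow> 'a \<Rightarrow> nat list \<Rightarrow> 'a list" where
  "unary_code c0 c1 as = concat (map (\<lambda>a. replicate a c0 @ [c1]) as)"

lemma unary_code_Nil [simp]: "unary_code c0 c1 [] = []"
  by (simp add: unary_code_def)

lemma unary_code_Cons [simp]:
  "unary_code c0 c1 (a # as) = replicate a c0 @ c1 # unary_code c0 c1 as"
  by (simp add: unary_code_def)

lemma unary_code_append [simp]:
  "unary_code c0 c1 (as @ bs) = unary_code c0 c1 as @ unary_code c0 c1 bs"
  by (simp add: unary_code_def)

lemma unary_code_concat: "unary_code c0 c1 (concat ass) = concat (map (unary_code c0 c1) ass)"
  by (induction ass) auto

lemma unary_code_eq_Nil_iff [simp]: "unary_code c0 c1 as = [] \<longleftrightarrow> as = []"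
  by (cases as) auto

lemma length_unary_code: "length (unary_code c0 c1 as) = sum_list (map Suc as)"
  by (induction as) auto

lemma last_unary_code: "as \<noteq> [] \<Longrightarrow> last (unary_code c0 c1 as) = c1"
  by (induction as rule: list_nonempty_induct) auto

lemma unary_code_eq_iff:
  assumes "c0 \<noteq> c1"
  shows "unary_code c0 c1 as = unary_code c0 c1 bs \<longleftrightarrow> as = bs"
proof
  show "unary_code c0 c1 as = unary_code c0 c1 bs \<Longrightarrow> as = bs"
  proof (induction as arbitrary: bs)
    case Nil
    then show ?case by (metis unary_code_eq_Nil_iff)
  next
    case (Cons a as)
    then obtain b bs' where bs: "bs = b # bs'" by (cases bs) auto
    with Cons.prems have "a = b \<and> unary_code c0 c1 as = unary_code c0 c1 bs'"
      by (intro replicate_append_Cons_cancel[OF assms]) simp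
    with bs Cons.IH show ?case by simp
  qed
qed simp

lemma unary_code_split:
  assumes "c0 \<noteq> c1" "unary_code c0 c1 bs = xs @ ys" "xs = [] \<or> last xs = c1"
  obtains b1 b2 where "bs = b1 @ b2" "unary_code c0 c1 b1 = xs" "unary_code c0 c1 b2 = ys"
  using assms(2,3)
proof (induction bs arbitrary: xs thesis)
  case Nil
  then show ?case by simp
next
  case (Cons a bs)
  show ?case
  proof (cases "xs = []")
    case True
    then show ?thesis using Cons.prems by (intro Cons.prems(1)[of "[]"]) auto
  next
    case xs_ne: False
    have "(replicate a c0 @ [c1]) @ unary_code c0 c1 bs = xs @ ys"
      using Cons.prems(2) by simp
    then obtain us where
      "replicate a c0 @ [c1] = xs @ us \<and> us @ unary_code c0 c1 bs = ys \<or>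
       (replicate a c0 @ [c1]) @ us = xs \<and> unary_code c0 c1 bs = us @ ys"
      by (auto simp only: append_eq_append_conv2)
    then show ?thesis
    proof (elim disjE conjE)
      assume first: "replicate a c0 @ [c1] = xs @ us" and rest: "us @ unary_code c0 c1 bs = ys"
      have "us = []"
        using last_prefix_of_replicate_snoc[OF first[symmetric] xs_ne] Cons.prems(3) xs_ne assms(1)
        by auto
      then show ?thesis using first rest by (intro Cons.prems(1)[of "[a]" bs]) auto
    next
      assume first: "(replicate a c0 @ [c1]) @ us = xs" and rest: "unary_code c0 c1 bs = us @ ys"
      have "us = [] \<or> last us = c1"
        using first Cons.prems(3) xs_ne by (metis last_appendR)
      then obtain b1 b2 where "bs = b1 @ b2" "unary_code c0 c1 b1 = us" "unary_code c0 c1 b2 = ys"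
        using Cons.IH rest by blast
      then show ?thesis using first by (intro Cons.prems(1)[of "a # b1" b2]) auto
    qed
  qed
qed

lemma unary_code_append_replicate_eq:
  assumes "c0 \<noteq> c1" "unary_code c0 c1 bs @ replicate a c0 = xs @ replicate b c0" "a \<le> b"
  shows "a = b \<and> xs = unary_code c0 c1 bs"
proof (cases "a = b")
  case True
  then show ?thesis using assms(2) by simp
next
  case False
  have "replicate b c0 = replicate (b - a) c0 @ replicate a c0"
    using assms(3) by (metis le_add_diff_inverse2 replicate_add)
  then have "unary_code c0 c1 bs = xs @ replicate (b - a) c0"
    using assms(2) by simp
  moreover have "0 < b - a" using False assms(3) by simp
  ultimately have "bs \<noteq> []" "last (unary_code c0 c1 bs) = c0"
    by (auto simp: last_append)
  then show ?thesis using assms(1) last_unary_code by metis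
qed

lemma unary_code_eq_append_unary_code_Cons:
  assumes "c0 \<noteq> c1" "unary_code c0 c1 bs = xs @ unary_code c0 c1 (c # cs)"
  obtains b a where "bs = b @ a # cs" "unary_code c0 c1 b @ replicate a c0 = xs @ replicate c c0"
proof -
  have "unary_code c0 c1 bs = (xs @ replicate c c0 @ [c1]) @ unary_code c0 c1 cs"
    using assms(2) by simp
  then obtain b' cs' where "bs = b' @ cs'" and b': "unary_code c0 c1 b' = xs @ replicate c c0 @ [c1]"
    and "unary_code c0 c1 cs' = unary_code c0 c1 cs"
    by (rule unary_code_split[OF assms(1)]) simp
  have "b' \<noteq> []" using b' by auto
  then obtain b a where "b' = b @ [a]" by (cases b' rule: rev_cases) auto
  with \<open>bs = b' @ cs'\<close> b' \<open>unary_code c0 c1 cs' = unary_code c0 c1 cs\<close> show ?thesis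
    using that unary_code_eq_iff[OF assms(1)] by simp
qed

lemma unary_code_eq_append_power_aligned:
  assumes c: "c0 \<noteq> c1" and code: "unary_code c0 c1 bs = v @ concat (replicate (Suc (Suc n)) u)"
    and "u \<noteq> []"
  obtains b0 cs where "bs = b0 @ concat (replicate (Suc n) cs)" "unary_code c0 c1 b0 = v @ u"
    "u = unary_code c0 c1 cs"
proof -
  have code_snoc: "unary_code c0 c1 bs = (v @ concat (replicate (Suc n) u)) @ u"
    using code by (simp add: concat_replicate_snoc del: replicate_Suc)
  then have "bs \<noteq> []" using \<open>u \<noteq> []\<close> by auto
  then have last_u: "last u = c1"
    using code_snoc \<open>u \<noteq> []\<close> last_unary_code by (metis last_appendR)
  then have "last (v @ concat (replicate (Suc n) u)) = c1"
    using \<open>u \<noteq> []\<close> by (simp add: concat_replicate_snoc del: replicate_Suc)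
  then obtain cs where u: "u = unary_code c0 c1 cs"
    using unary_code_split[OF c code_snoc] by metis
  have code_Cons: "unary_code c0 c1 bs = (v @ u) @ concat (replicate (Suc n) u)"
    using code by simp
  have "last (v @ u) = c1" using last_u \<open>u \<noteq> []\<close> by simp
  then obtain b0 b2 where "bs = b0 @ b2" "unary_code c0 c1 b0 = v @ u"
    and b2: "unary_code c0 c1 b2 = concat (replicate (Suc n) u)"
    by (rule unary_code_split[OF c code_Cons disjI2])
  moreover have "b2 = concat (replicate (Suc n) cs)"
    using b2 unfolding u by (simp add: unary_code_eq_iff[OF c, symmetric] unary_code_concat
        del: replicate_Suc)
  ultimately show ?thesis using that u by blast
qed

lemma sorted_unary_code_eq_append_power:
  assumes c: "c0 \<noteq> c1" and "sorted bs" and code: "unary_code c0 c1 bs = v @ concat (replicate n u)"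
    and "2 \<le> n" "u \<noteq> []"
  obtains as j L where "bs = as @ replicate (n * L) j" "v = unary_code c0 c1 as"
    "u = unary_code c0 c1 (replicate L j)" "1 \<le> L"
proof -
  obtain n' where n: "n = Suc (Suc n')" using \<open>2 \<le> n\<close> by (metis add_2_eq_Suc le_Suc_ex)
  obtain b0 cs where bs: "bs = b0 @ concat (replicate (Suc n') cs)"
    and b0: "unary_code c0 c1 b0 = v @ u" and u: "u = unary_code c0 c1 cs"
    by (rule unary_code_eq_append_power_aligned[OF c code[unfolded n] \<open>u \<noteq> []\<close>])
  obtain c cs' where cs: "cs = c # cs'" using u \<open>u \<noteq> []\<close> by (cases cs) auto
  \<comment> \<open>The first copy of \<open>u\<close> need not be aligned: its leading block \<open>0\<^sup>c1\<close> may be the tail of a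
    coded \<open>0\<^sup>a1\<close> with \<open>a \<ge> c\<close>; sortedness gives \<open>a \<le> c\<close>.\<close>
  obtain b a where b0_eq: "b0 = b @ a # cs'"
    and tail: "unary_code c0 c1 b @ replicate a c0 = v @ replicate c c0"
    by (rule unary_code_eq_append_unary_code_Cons[OF c, of b0 v c cs']) (simp add: b0 u cs)
  have sorted_bs: "sorted (b @ a # cs' @ c # cs' @ concat (replicate n' cs))"
    using \<open>sorted bs\<close> by (simp add: bs b0_eq cs)
  then have "a \<le> c" by (simp add: sorted_append)
  with tail have "a = c" "v = unary_code c0 c1 b"
    using unary_code_append_replicate_eq[OF c] by blast+
  then have bs_eq: "bs = b @ concat (replicate n cs)"
    by (simp add: bs b0_eq cs n)
  have "sorted (cs @ cs)"
    using sorted_bs \<open>a = c\<close> by (simp add: cs sorted_append)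
  then have cs_rep: "cs = replicate (length cs) (hd cs)"
    using sorted_append_self_imp_replicate cs by blast
  show ?thesis
  proof (rule that)
    show "bs = b @ replicate (n * length cs) (hd cs)"
      using bs_eq cs_rep by (metis concat_replicate_replicate)
    show "u = unary_code c0 c1 (replicate (length cs) (hd cs))" using u cs_rep by simp
    show "v = unary_code c0 c1 b" by fact
    show "1 \<le> length cs" using cs by simp
  qed
qed

lemma sorted_unary_code_eq_concat_powers:
  assumes c: "c0 \<noteq> c1" and "sorted bs"
    and "unary_code c0 c1 bs = concat (map (\<lambda>t. concat (replicate (n t) (u t))) [0..<K])"
    and "\<forall>t<K. 2 \<le> n t \<and> u t \<noteq> []"
  obtains j L where "\<forall>t<K. 1 \<le> L t \<and> u t = unary_code c0 c1 (replicate (L t) (j t))"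
    "bs = concat (map (\<lambda>t. replicate (n t * L t) (j t)) [0..<K])"
  using assms(2-)
proof (induction K arbitrary: bs thesis)
  case 0
  then show ?case by simp
next
  case (Suc K)
  have "unary_code c0 c1 bs = concat (map (\<lambda>t. concat (replicate (n t) (u t))) [0..<K])
      @ concat (replicate (n K) (u K))"
    using Suc.prems(3) by simp
  then obtain as jK LK where bs: "bs = as @ replicate (n K * LK) jK"
    and as: "concat (map (\<lambda>t. concat (replicate (n t) (u t))) [0..<K]) = unary_code c0 c1 as"
    and uK: "u K = unary_code c0 c1 (replicate LK jK)" "1 \<le> LK"
    by (rule sorted_unary_code_eq_append_power[OF c \<open>sorted bs\<close>]) (use Suc.prems(4) in auto)
  have "sorted as" using \<open>sorted bs\<close> bs by (simp add: sorted_append)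
  obtain j L where jL: "\<forall>t<K. 1 \<le> L t \<and> u t = unary_code c0 c1 (replicate (L t) (j t))"
    and as_eq: "as = concat (map (\<lambda>t. replicate (n t * L t) (j t)) [0..<K])"
    by (rule Suc.IH[OF _ \<open>sorted as\<close> as[symmetric]]) (use Suc.prems(4) in auto)
  let ?L = "L(K := LK)" and ?j = "j(K := jK)"
  show ?case
  proof (rule Suc.prems(1))
    show "\<forall>t<Suc K. 1 \<le> ?L t \<and> u t = unary_code c0 c1 (replicate (?L t) (?j t))"
      using jL uK by (auto simp: less_Suc_eq)
    have "map (\<lambda>t. replicate (n t * ?L t) (?j t)) [0..<K] = map (\<lambda>t. replicate (n t * L t) (j t)) [0..<K]"
      by (rule map_cong) auto
    then show "bs = concat (map (\<lambda>t. replicate (n t * ?L t) (?j t)) [0..<Suc K])"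
      by (simp add: bs as_eq fun_upd_same del: map_eq_conv fun_upd_apply)
  qed
qed

section \<open>The exponent list of the word\<close>

definition exponents :: "(nat \<Rightarrow> nat) \<Rightarrow> nat \<Rightarrow> nat list" where
  "exponents i j = concat (map (\<lambda>t. replicate (i t) t) [1..<j])"

lemma exponents_0 [simp]: "exponents i 0 = []" and exponents_Suc_0 [simp]: "exponents i (Suc 0) = []"
  by (simp_all add: exponents_def)

lemma exponents_Suc: "1 \<le> j \<Longrightarrow> exponents i (Suc j) = exponents i j @ replicate (i j) j"
  by (simp add: exponents_def)

lemma exponents_append:
  "1 \<le> j \<Longrightarrow> j \<le> j' \<Longrightarrow> exponents i j' = exponents i j @ concat (map (\<lambda>t. replicate (i t) t) [j..<j'])"
  using upt_add_eq_append[of 1 j "j' - j"] by (simp add: exponents_def)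

lemma set_exponents: "set (exponents i j) \<subseteq> {1..<j}"
  by (auto simp: exponents_def)

lemma sorted_exponents: "sorted (exponents i j)"
proof (induction j)
  case (Suc j)
  then show ?case
    using set_exponents[of i j] by (cases "j = 0") (auto simp: exponents_Suc sorted_append)
qed simp

lemma count_list_exponents: "t \<in> {1..<j} \<Longrightarrow> count_list (exponents i j) t = i t"
proof (induction j)
  case (Suc j)
  then show ?case
    using set_exponents[of i j] by (cases "t = j") (auto simp: exponents_Suc count_list_0_iff)
qed simp

lemma length_unary_code_exponents:
  "length (unary_code c0 c1 (exponents i j)) = (\<Sum>t\<in>{1..<j}. (t + 1) * i t)"
proof (induction j)
  case (Suc j)
  then show ?case by (cases "j = 0") (simp_all add: exponents_Suc length_unary_code sum_list_replicate)
qed simp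

lemma blk_eq_unary_code: "blk c0 c1 j i = unary_code c0 c1 (replicate i j)"
  by (simp add: blk_def unary_code_def map_replicate)

lemma wword_eq_unary_code_exponents: "wword c0 c1 i l = unary_code c0 c1 (exponents i (Suc l))"
  by (simp add: wword_def exponents_def unary_code_concat blk_eq_unary_code o_def)

lemma exponents_boundary_is_block_boundary:
  assumes exps: "exponents i (Suc l) = concat (map (\<lambda>t. replicate (N t) (a t)) [0..<K])"
    and pos: "\<forall>t\<in>{1..l}. 1 \<le> i t" and "1 \<le> j" "j \<le> Suc l"
  shows "\<exists>g\<le>K. length (exponents i j) = (\<Sum>t<g. N t)"
proof -
  consider "j = 1" | "j = Suc l" | "2 \<le> j" "j \<le> l" using assms(3,4) by linarith
  then show ?thesis
  proof cases
    case 1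
    then show ?thesis by (intro exI[of _ 0]) simp
  next
    case 2
    then show ?thesis using exps by (intro exI[of _ K]) (simp add: length_concat_replicate_upt)
  next
    case 3
    then obtain j' where j: "j = Suc j'" "1 \<le> j'" by (cases j) auto
    define zs where "zs = concat (map (\<lambda>t. replicate (i t) t) [j..<Suc l])"
    have split: "exponents i j @ zs = concat (map (\<lambda>t. replicate (N t) (a t)) [0..<K])"
      using exponents_append[of j "Suc l" i] exps 3 by (simp add: zs_def)
    have "1 \<le> i j" "1 \<le> i j'" using pos 3 j by auto
    then obtain r r' where "i j = Suc r" "i j' = Suc r'" by (metis Suc_le_D One_nat_def)
    moreover have "zs = replicate (i j) j @ concat (map (\<lambda>t. replicate (i t) t) [Suc j..<Suc l])"
      unfolding zs_def using 3 by (simp add: upt_conv_Cons del: upt_Suc)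
    ultimately have "zs \<noteq> []" "hd zs = j" "last (exponents i j) = j'"
      using j by (simp_all add: exponents_Suc)
    then show ?thesis using run_boundary_is_block_boundary[OF split] j by simp
  qed
qed

lemma exponent_run_is_union_of_blocks:
  assumes exps: "exponents i (Suc l) = concat (map (\<lambda>t. replicate (N t) (a t)) [0..<K])"
    and pos: "\<forall>t\<in>{1..l}. 1 \<le> i t" and j: "j \<in> {1..l}"
  obtains g g' where "g < g'" "g' \<le> K"
    "concat (map (\<lambda>t. replicate (N t) (a t)) [0..<g]) = exponents i j"
    "concat (map (\<lambda>t. replicate (N t) (a t)) [0..<g']) = exponents i (Suc j)"
proof -
  have prefix: "concat (map (\<lambda>t. replicate (N t) (a t)) [0..<g]) = exponents i j'"
    if "g \<le> K" "length (exponents i j') = (\<Sum>t<g. N t)" "1 \<le> j'" "j' \<le> Suc l" for g j'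
  proof -
    have "concat (map (\<lambda>t. replicate (N t) (a t)) [0..<g]) = take (\<Sum>t<g. N t) (exponents i (Suc l))"
      using take_length_concat_map_upt[OF that(1), of "\<lambda>t. replicate (N t) (a t)"] exps
      by (simp add: length_concat_replicate_upt)
    also have "\<dots> = exponents i j'"
      using exponents_append[OF that(3,4)] that(2) by simp
    finally show ?thesis .
  qed
  obtain g where g: "g \<le> K" "length (exponents i j) = (\<Sum>t<g. N t)"
    using exponents_boundary_is_block_boundary[OF exps pos, of j] j by auto
  obtain g' where g': "g' \<le> K" "length (exponents i (Suc j)) = (\<Sum>t<g'. N t)"
    using exponents_boundary_is_block_boundary[OF exps pos, of "Suc j"] j by auto
  have "length (exponents i j) < length (exponents i (Suc j))"
    using pos j by (force simp: exponents_Suc)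
  then have "\<not> g' \<le> g"
    using g(2) g'(2) sum_mono2[of "{..<g}" "{..<g'}" N] by auto
  show ?thesis
  proof (rule that)
    show "g < g'" using \<open>\<not> g' \<le> g\<close> by simp
    show "g' \<le> K" by (rule g'(1))
    show "concat (map (\<lambda>t. replicate (N t) (a t)) [0..<g]) = exponents i j"
      using prefix g j by simp
    show "concat (map (\<lambda>t. replicate (N t) (a t)) [0..<g']) = exponents i (Suc j)"
      using prefix g' j by simp
  qed
qed

lemma exponents_block_bound:
  assumes "exponents i (Suc l) = concat (map (\<lambda>t. replicate (N t) (a t)) [0..<K])"
    and "t < K" "0 < N t"
  shows "a t \<in> {1..l} \<and> N t \<le> i (a t)"
proof -
  have split: "exponents i (Suc l) = concat (map (\<lambda>t. replicate (N t) (a t)) [0..<t])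
      @ replicate (N t) (a t) @ concat (map (\<lambda>t. replicate (N t) (a t)) [Suc t..<K])"
    using concat_map_upt_split[OF \<open>t < K\<close>] assms(1) by simp
  then have "a t \<in> set (exponents i (Suc l))" using \<open>0 < N t\<close> by simp
  then have "a t \<in> {1..l}" using set_exponents by fastforce
  moreover have "N t \<le> count_list (exponents i (Suc l)) (a t)" using split by simp
  ultimately show ?thesis using count_list_exponents[of "a t" "Suc l" i] by simp
qed

section \<open>Images of the variable blocks\<close>

lemma subst_append [simp]: "subst h (\<pi> @ \<pi>') = subst h \<pi> @ subst h \<pi>'"
  by (simp add: subst_def)

lemma subst_concat: "subst h (concat \<pi>s) = concat (map (subst h) \<pi>s)"
  by (induction \<pi>s) (simp_all add: subst_def)

lemma subst_replicate_Var: "subst h (replicate c (Var y)) = concat (replicate c (h y))"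
  by (induction c) (simp_all add: subst_def subst_sym_def)

lemma subst_powpat:
  "subst h (powpat x n k) = concat (map (\<lambda>t. concat (replicate (n t) (h (x t)))) [0..<Suc k])"
  by (simp add: powpat_def subst_concat subst_replicate_Var o_def)

lemma subst_take_powpat:
  fixes h :: "'x \<Rightarrow> 'a list"
  assumes "g \<le> Suc k"
  shows "subst h (take (\<Sum>t<g. n t) (powpat x n k))
    = concat (map (\<lambda>t. concat (replicate (n t) (h (x t)))) [0..<g])"
proof -
  have "take (\<Sum>t<g. n t) (powpat x n k) = concat (map (\<lambda>t. replicate (n t) (Var (x t) :: ('x, 'a) sym)) [0..<g])"
    using take_length_concat_map_upt[OF assms, of "\<lambda>t. replicate (n t) (Var (x t))"]
    by (simp add: powpat_def length_concat_replicate_upt)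
  then show ?thesis by (simp add: subst_concat subst_replicate_Var o_def)
qed

definition image_offset :: "('x \<Rightarrow> 'a list) \<Rightarrow> ('x, 'a) sym list \<Rightarrow> (nat \<Rightarrow> nat) \<Rightarrow> nat \<Rightarrow> nat" where
  "image_offset h \<pi> n t = length (subst h (take (\<Sum>s<t. n s) \<pi>))"

lemma Imap_Jstart_Jend:
  "Imap h \<pi> (Jstart n t) (Jend n t) = {image_offset h \<pi> n t + 1 .. image_offset h \<pi> n (Suc t)}"
  by (simp add: Imap_def Jstart_def Jend_def image_offset_def lessThan_Suc_atMost)

lemma mono_image_offset: "mono (image_offset h \<pi> n)"
proof (rule monoI)
  fix a b :: nat
  assume "a \<le> b"
  then have "(\<Sum>s<a. n s) \<le> (\<Sum>s<b. n s)" by (simp add: sum_mono2)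
  then have "take (\<Sum>s<a. n s) (take (\<Sum>s<b. n s) \<pi>) = take (\<Sum>s<a. n s) \<pi>"
    by (simp add: min_absorb1)
  then obtain rest where "take (\<Sum>s<b. n s) \<pi> = take (\<Sum>s<a. n s) \<pi> @ rest"
    by (metis append_take_drop_id)
  then show "image_offset h \<pi> n a \<le> image_offset h \<pi> n b"
    by (simp add: image_offset_def)
qed

lemma image_offset_powpat:
  assumes "\<forall>t\<le>k. h (x t) = unary_code c0 c1 (replicate (L t) (j t))" "g \<le> Suc k"
  shows "image_offset h (powpat x n k) n g
    = length (unary_code c0 c1 (concat (map (\<lambda>t. replicate (n t * L t) (j t)) [0..<g])))"
proof -
  have "concat (map (\<lambda>t. concat (replicate (n t) (h (x t)))) [0..<g])
      = unary_code c0 c1 (concat (map (\<lambda>t. replicate (n t * L t) (j t)) [0..<g]))"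
    unfolding unary_code_concat map_map o_def using assms
    by (intro arg_cong[where f = concat] map_cong)
      (auto simp: unary_code_concat map_replicate simp flip: concat_replicate_replicate)
  then show ?thesis
    using subst_take_powpat[OF assms(2), of h n x] by (simp add: image_offset_def)
qed

lemma subst_powpat_eq_wword_imp_blocks:
  assumes c: "c0 \<noteq> c1" and "subst h (powpat x n k) = wword c0 c1 i l"
    and "\<forall>t\<le>k. 2 \<le> n t \<and> h (x t) \<noteq> []"
  obtains j L where "\<forall>t\<le>k. 1 \<le> L t \<and> h (x t) = unary_code c0 c1 (replicate (L t) (j t))"
    "exponents i (Suc l) = concat (map (\<lambda>t. replicate (n t * L t) (j t)) [0..<Suc k])"
proof -
  have code: "unary_code c0 c1 (exponents i (Suc l))
      = concat (map (\<lambda>t. concat (replicate (n t) (h (x t)))) [0..<Suc k])"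
    using assms(2) by (simp add: wword_eq_unary_code_exponents subst_powpat)
  obtain j L where jL: "\<forall>t<Suc k. 1 \<le> L t \<and> h (x t) = unary_code c0 c1 (replicate (L t) (j t))"
    and blocks: "exponents i (Suc l) = concat (map (\<lambda>t. replicate (n t * L t) (j t)) [0..<Suc k])"
    by (rule sorted_unary_code_eq_concat_powers[OF c sorted_exponents code]) (use assms(3) in auto)
  show ?thesis
  proof (rule that)
    show "\<forall>t\<le>k. 1 \<le> L t \<and> h (x t) = unary_code c0 c1 (replicate (L t) (j t))"
      using jL le_imp_less_Suc by blast
  qed (rule blocks)
qed

lemma variable_image_eq_blk:
  assumes hx: "\<forall>t\<le>k. 1 \<le> L t \<and> h (x t) = unary_code c0 c1 (replicate (L t) (j t))"
    and blocks: "exponents i (Suc l) = concat (map (\<lambda>t. replicate (n t * L t) (j t)) [0..<Suc k])"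
    and "t \<le> k" "1 \<le> n t"
  shows "\<exists>j'\<in>{1..l}. \<exists>i'\<in>{1..i j'}. h (x t) = blk c0 c1 j' i'"
proof -
  have "1 \<le> L t" using hx \<open>t \<le> k\<close> by simp
  then have "j t \<in> {1..l}" "n t * L t \<le> i (j t)"
    using exponents_block_bound[OF blocks, of t] \<open>t \<le> k\<close> \<open>1 \<le> n t\<close> by auto
  have "L t \<le> n t * L t" using \<open>1 \<le> n t\<close> by simp
  also have "\<dots> \<le> i (j t)" by fact
  finally have "L t \<in> {1..i (j t)}" using \<open>1 \<le> L t\<close> by simp
  moreover have "h (x t) = blk c0 c1 (j t) (L t)"
    using hx \<open>t \<le> k\<close> by (simp add: blk_eq_unary_code)
  ultimately show ?thesis using \<open>j t \<in> {1..l}\<close> by blast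
qed

lemma Iw_eq_image_offsets:
  assumes hx: "\<forall>t\<le>k. h (x t) = unary_code c0 c1 (replicate (L t) (j t))"
    and blocks: "exponents i (Suc l) = concat (map (\<lambda>t. replicate (n t * L t) (j t)) [0..<Suc k])"
    and "\<forall>t\<in>{1..l}. 1 \<le> i t" "j' \<in> {1..l}"
  obtains g g' where "g < g'" "g' \<le> Suc k"
    "Iw i j' = {image_offset h (powpat x n k) n g + 1 .. image_offset h (powpat x n k) n g'}"
proof -
  obtain g g' where "g < g'" "g' \<le> Suc k"
    and "concat (map (\<lambda>t. replicate (n t * L t) (j t)) [0..<g]) = exponents i j'"
      "concat (map (\<lambda>t. replicate (n t * L t) (j t)) [0..<g']) = exponents i (Suc j')"
    by (rule exponent_run_is_union_of_blocks[OF blocks assms(3,4)])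
  with that show ?thesis
    using image_offset_powpat[where h = h and x = x, OF hx] \<open>j' \<in> {1..l}\<close>
    by (simp add: Iw_def length_unary_code_exponents atLeastLessThanSuc_atLeastAtMost)
qed

theorem mainTheorem11:
  fixes c0 c1 :: 'a
    and m k l :: nat
    and x :: "nat \<Rightarrow> nat"
    and n i :: "nat \<Rightarrow> nat"
    and h :: "nat \<Rightarrow> 'a list"
  assumes "c0 \<noteq> c1"
    and "m \<ge> 2"
    and "inj_on x {0..k}"
    and "\<forall>j\<in>{0..k}. n j \<in> {2..m}"
    and "l \<ge> 1"
    and "\<forall>j\<in>{1..l}. i j \<ge> 1"
    and "wword c0 c1 i l \<in> lang (powpat x n k)"
    and "subst h (powpat x n k) = wword c0 c1 i l"
    and "\<forall>j\<in>{0..k}. h (x j) \<noteq> []"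
  shows "(\<forall>j\<in>{0..k}. \<exists>j'\<in>{1..l}. \<exists>i'\<in>{1..i j'}. h (x j) = blk c0 c1 j' i')
       \<and> (\<forall>j\<in>{1..l}. \<exists>g\<in>{0..k}. \<exists>hj\<in>{0..k - g}.
            Iw i j = (\<Union>t\<in>{0..hj}. Imap h (powpat x n k) (Jstart n (g + t)) (Jend n (g + t)))
          \<and> (\<forall>t1\<in>{0..hj}. \<forall>t2\<in>{0..hj}. t1 \<noteq> t2 \<longrightarrow>
               Imap h (powpat x n k) (Jstart n (g + t1)) (Jend n (g + t1))
             \<inter> Imap h (powpat x n k) (Jstart n (g + t2)) (Jend n (g + t2)) = {}))"
proof -
  let ?p = "image_offset h (powpat x n k) n"
  obtain j L where hx: "\<forall>t\<le>k. 1 \<le> L t \<and> h (x t) = unary_code c0 c1 (replicate (L t) (j t))"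
    and blocks: "exponents i (Suc l) = concat (map (\<lambda>t. replicate (n t * L t) (j t)) [0..<Suc k])"
    by (rule subst_powpat_eq_wword_imp_blocks[OF assms(1,8)]) (use assms(4,9) in auto)
  show ?thesis
    unfolding Imap_Jstart_Jend
  proof (intro conjI ballI)
    fix t assume "t \<in> {0..k}"
    moreover have "n t \<in> {2..m}" using assms(4) \<open>t \<in> {0..k}\<close> by blast
    ultimately have "t \<le> k" "1 \<le> n t" by auto
    then show "\<exists>j'\<in>{1..l}. \<exists>i'\<in>{1..i j'}. h (x t) = blk c0 c1 j' i'"
      by (rule variable_image_eq_blk[where h = h and x = x, OF hx blocks])
  next
    fix j' assume j': "j' \<in> {1..l}"
    obtain g g' where "g < g'" "g' \<le> Suc k" and Iw: "Iw i j' = {?p g + 1 .. ?p g'}"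
      by (rule Iw_eq_image_offsets[where h = h and x = x, OF _ blocks assms(6) j']) (use hx in auto)
    show "\<exists>g\<in>{0..k}. \<exists>hj\<in>{0..k - g}. Iw i j' = (\<Union>t\<in>{0..hj}. {?p (g + t) + 1 .. ?p (Suc (g + t))})
      \<and> (\<forall>t1\<in>{0..hj}. \<forall>t2\<in>{0..hj}. t1 \<noteq> t2 \<longrightarrow>
           {?p (g + t1) + 1 .. ?p (Suc (g + t1))} \<inter> {?p (g + t2) + 1 .. ?p (Suc (g + t2))} = {})"
      unfolding Iw
      by (rule bexI[of _ g], rule bexI[of _ "g' - Suc g"],
          rule interval_eq_disjoint_UN_consecutive[OF mono_image_offset \<open>g < g'\<close>])
        (use \<open>g < g'\<close> \<open>g' \<le> Suc k\<close> in auto)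
  qed
qed

end
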